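(* Let $G$ be a finite group, let $\Pi$ be the set of prime divisors of $|G|$, and let $\mathrm{GKC}(G)$ be the Gruenberg--Kegel complex of $G$. Then: (i) the $1$-skeleton of $\mathrm{GKC}(G)$ is the Gruenberg--Kegel graph of $G$; (ii) if $G$ is nilpotent, then $\mathrm{GKC}(G)$ is a simplex, i.e. $\Pi$ itself is a simplex of $\mathrm{GKC}(G)$; (iii) there is a positive integer $d(G)$ such that, for positive integers $n$, $\mathrm{GKC}(G^n)$ is a simplex if and only if $n\ge d(G)$, where $G^n$ is the direct product of $n$ copies of $G$.
   Context: The Gruenberg--Kegel complex $\mathrm{GKC}(G)$ of a finite group $G$ has vertex set $\Pi$, the set of prime divisors of $|G|$, and a subset $\Gamma\subseteq\Pi$ is a simplex if and only if $G$ contains an element whose order is the product of the primes in $\Gamma$. The Gruenberg--Kegel graph of $G$ has vertex set $\Pi$, with distinct primes $p,q$ adjacent if $G$ contains an element of order $pq$. The $1$-skeleton of a simplicial complex is the graph formed by its simplices of cardinality at most $2$. A complex is called a simplex if its whole vertex set is one of its simplices. *)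

theory Defs
  imports "HOL-Algebra.Algebra" "HOL-Computational_Algebra.Primes"
begin

definition prime_divs :: "('a, 'b) monoid_scheme \<Rightarrow> nat set" where
  "prime_divs G = {p. Factorial_Ring.prime p \<and> p dvd order G}"

definition GKC :: "('a, 'b) monoid_scheme \<Rightarrow> nat set set" where
  "GKC G = {S. S \<subseteq> prime_divs G \<and> (\<exists>x\<in>carrier G. group.ord G x = \<Prod>S)}"

definition GK_adj :: "('a, 'b) monoid_scheme \<Rightarrow> nat \<Rightarrow> nat \<Rightarrow> bool" where
  "GK_adj G p q \<longleftrightarrow> p \<in> prime_divs G \<and> q \<in> prime_divs G \<and> p \<noteq> q \<and>
     (\<exists>x\<in>carrier G. group.ord G x = p * q)"

definition skeleton1_vertices :: "'v set set \<Rightarrow> 'v set" where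
  "skeleton1_vertices K = {v. {v} \<in> K}"

definition skeleton1_edges :: "'v set set \<Rightarrow> 'v set set" where
  "skeleton1_edges K = {e. e \<in> K \<and> card e = 2}"

definition is_simplex_complex :: "'v set \<Rightarrow> 'v set set \<Rightarrow> bool" where
  "is_simplex_complex V K \<longleftrightarrow> V \<in> K"

fun lower_central :: "('a, 'b) monoid_scheme \<Rightarrow> nat \<Rightarrow> 'a set" where
  "lower_central G 0 = carrier G"
| "lower_central G (Suc i) =
     generate G {h \<otimes>\<^bsub>G\<^esub> k \<otimes>\<^bsub>G\<^esub> inv\<^bsub>G\<^esub> h \<otimes>\<^bsub>G\<^esub> inv\<^bsub>G\<^esub> k | h k.
                  h \<in> lower_central G i \<and> k \<in> carrier G}"

definition nilpotent_group :: "('a, 'b) monoid_scheme \<Rightarrow> bool" where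
  "nilpotent_group G \<longleftrightarrow> group G \<and> (\<exists>c. lower_central G c = {\<one>\<^bsub>G\<^esub>})"

definition dir_power :: "('a, 'b) monoid_scheme \<Rightarrow> nat \<Rightarrow> (nat \<Rightarrow> 'a) monoid" where
  "dir_power G n = product_group {..<n} (\<lambda>_. G)"

end

theory Submission
  imports Defs
begin

(* Part (i) is Cauchy's theorem: every prime divisor p of |G| is the order of an element.

   Part (ii): in a nilpotent group, elements x, y of coprime orders commute. Their commutator c
   lies in every term of the lower central series: if c is in gamma_i, then modulo gamma_(i+1)
   it is central, and a central commutator of elements of coprime orders m, n is trivial,
   because conjugating y by x^m multiplies it by c^m, whence c^m = 1, and likewise c^n = 1.
   Multiplying elements of the distinct prime orders in Pi then gives an element of order prod Pi.

   Part (iii): the order of an element of G^n is the lcm of the orders of its coordinates.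
   Padding with 1 shows that G^n having an element of order prod Pi is upward closed in n,
   and it holds for n = |Pi| by putting an element of order p into a separate coordinate for
   each p in Pi; d(G) is the least such n. *)

context group begin

lemma ex_ord_eq_prime:
  assumes fin: "finite (carrier G)" and p: "Factorial_Ring.prime p" and "p dvd order G"
  shows "\<exists>x\<in>carrier G. ord x = p"
proof -
  obtain m where m: "order G = p ^ 1 * m" using \<open>p dvd order G\<close> by auto
  obtain H where H: "subgroup H G" "card H = p"
    using sylow_thm[OF p is_group m fin] by auto
  obtain x where x: "x \<in> H" "x \<noteq> \<one>"
    using H(2) prime_ge_2_nat[OF p] subset_singletonD[of H \<one>] by fastforce
  have xG: "x \<in> carrier G" using subgroup.mem_carrier[OF H(1) x(1)] .
  have "x [^]\<^bsub>G\<lparr>carrier := H\<rparr>\<^esub> order (G\<lparr>carrier := H\<rparr>) = \<one>"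
    using group.pow_order_eq_1[OF subgroup_imp_group[OF H(1)]] x(1) by simp
  then have "x [^] p = \<one>" using H(2) by (simp add: order_def flip: nat_pow_consistent)
  then have "ord x dvd p" using pow_eq_id[OF xG] by simp
  moreover have "ord x \<noteq> 1" using ord_eq_1[OF xG] x(2) by simp
  ultimately show ?thesis using p xG prime_nat_iff by metis
qed

lemma inv_mult_cancel_left [simp]: "x \<in> carrier G \<Longrightarrow> y \<in> carrier G \<Longrightarrow> inv x \<otimes> (x \<otimes> y) = y"
  by (simp flip: m_assoc)

lemma mult_inv_cancel_left [simp]: "x \<in> carrier G \<Longrightarrow> y \<in> carrier G \<Longrightarrow> x \<otimes> (inv x \<otimes> y) = y"
  by (simp flip: m_assoc)

lemma commutator_mult_swap:
  "x \<in> carrier G \<Longrightarrow> y \<in> carrier G \<Longrightarrow> x \<otimes> y \<otimes> inv x \<otimes> inv y \<otimes> (y \<otimes> x) = x \<otimes> y"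
  by (simp add: m_assoc)

lemma ord_pow_dvd_ord:
  assumes "x \<in> carrier G"
  shows "ord (x [^] (k::nat)) dvd ord x"
  using assms by (metis pow_eq_id nat_pow_closed nat_pow_pow mult.commute pow_ord_eq_1 nat_pow_one)

lemma ord_dvd_ord_mult_coprime:
  assumes x: "x \<in> carrier G" and y: "y \<in> carrier G" and xy: "x \<otimes> y = y \<otimes> x"
    and cop: "coprime (ord x) (ord y)"
  shows "ord x dvd ord (x \<otimes> y)"
proof (cases "ord y = 0")
  case True
  then show ?thesis using cop by simp
next
  case False
  have "(x \<otimes> y) [^] ord y = x [^] ord y"
    using pow_mult_distrib[OF xy x y] x y by simp
  moreover have "ord (x [^] ord y) = ord x"
    using False cop ord_pow_gen[OF x] by (simp add: coprime_iff_gcd_eq_1)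
  moreover have "ord ((x \<otimes> y) [^] ord y) dvd ord (x \<otimes> y)"
    using x y by (simp add: ord_pow_dvd_ord)
  ultimately show ?thesis by simp
qed

lemma ord_mult_coprime:
  assumes x: "x \<in> carrier G" and y: "y \<in> carrier G" and xy: "x \<otimes> y = y \<otimes> x"
    and cop: "coprime (ord x) (ord y)"
  shows "ord (x \<otimes> y) = ord x * ord y"
proof (rule dvd_antisym)
  show "ord (x \<otimes> y) dvd ord x * ord y" using ord_mul_divides[OF xy x y] .
  have "ord x dvd ord (x \<otimes> y)" using ord_dvd_ord_mult_coprime[OF x y xy cop] .
  moreover have "ord y dvd ord (x \<otimes> y)"
    using ord_dvd_ord_mult_coprime[OF y x xy[symmetric]] cop xy by (simp add: coprime_commute)
  ultimately show "ord x * ord y dvd ord (x \<otimes> y)" using cop by (simp add: divides_mult)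
qed

lemma nat_pow_mult_twist:
  assumes u: "u \<in> carrier G" and v: "v \<in> carrier G" and c: "c \<in> carrier G"
    and uv: "u \<otimes> v = c \<otimes> v \<otimes> u" and cu: "c \<otimes> u = u \<otimes> c"
  shows "u [^] (k::nat) \<otimes> v = c [^] k \<otimes> v \<otimes> u [^] k"
proof (induction k)
  case 0 show ?case using v by simp
next
  case (Suc k)
  have "u [^] Suc k \<otimes> v = u [^] k \<otimes> (c \<otimes> v \<otimes> u)"
    using u v by (simp add: m_assoc uv)
  also have "\<dots> = c \<otimes> (u [^] k \<otimes> v) \<otimes> u"
    using u v c group_commutes_pow[OF cu[symmetric] u c, of k] by (simp add: m_assoc flip: m_assoc[of "u [^] k" c])
  also have "\<dots> = (c \<otimes> c [^] k) \<otimes> v \<otimes> (u [^] k \<otimes> u)"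
    using u v c by (simp add: Suc.IH m_assoc)
  also have "\<dots> = c [^] Suc k \<otimes> v \<otimes> u [^] Suc k"
    by (simp only: nat_pow_Suc2[OF c, symmetric] nat_pow_Suc[symmetric])
  finally show ?case .
qed

lemma central_commutator_eq_one:
  assumes u: "u \<in> carrier G" and v: "v \<in> carrier G" and c: "c \<in> carrier G"
    and uv: "u \<otimes> v = c \<otimes> v \<otimes> u" and cu: "c \<otimes> u = u \<otimes> c" and cv: "c \<otimes> v = v \<otimes> c"
    and um: "u [^] (m::nat) = \<one>" and vn: "v [^] (n::nat) = \<one>" and cop: "coprime m n"
  shows "c = \<one>"
proof -
  have "v = c [^] m \<otimes> v"
    using nat_pow_mult_twist[OF u v c uv cu, of m] um u v c by simp
  then have cm: "c [^] m = \<one>" using v c by simp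
  have vu: "v \<otimes> u = inv c \<otimes> u \<otimes> v"
    using u v c by (simp add: uv m_assoc)
  have "inv c \<otimes> v = inv c \<otimes> (v \<otimes> c) \<otimes> inv c"
    using v c by (simp add: m_assoc)
  also have "\<dots> = v \<otimes> inv c"
    using v c by (simp add: m_assoc flip: cv)
  finally have "inv c \<otimes> v = v \<otimes> inv c" .
  then have "u = inv c [^] n \<otimes> u"
    using nat_pow_mult_twist[OF v u inv_closed[OF c] vu, of n] vn u v c by simp
  then have cn: "inv c [^] n = \<one>" using u c by simp
  have "ord c dvd m" "ord c dvd n"
    using cm cn c by (simp_all add: pow_eq_id)
  then have "ord c = 1" using cop coprime_common_divisor_nat by blast
  then show ?thesis using ord_eq_1[OF c] by simp
qed

lemma commutator_in_lower_central_Suc: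
  "h \<in> lower_central G i \<Longrightarrow> k \<in> carrier G \<Longrightarrow> h \<otimes> k \<otimes> inv h \<otimes> inv k \<in> lower_central G (Suc i)"
  by (auto intro: generate.incl)

lemma lower_central_normal: "lower_central G i \<lhd> G"
proof (induction i)
  case 0
  show ?case using normal_self by simp
next
  case (Suc i)
  then interpret N: normal "lower_central G i" G .
  show ?case
    unfolding lower_central.simps(2)
  proof (rule normal_generateI)
    fix c g assume c: "c \<in> {h \<otimes> k \<otimes> inv h \<otimes> inv k | h k. h \<in> lower_central G i \<and> k \<in> carrier G}"
      and g: "g \<in> carrier G"
    then obtain h k where hk: "c = h \<otimes> k \<otimes> inv h \<otimes> inv k" "h \<in> lower_central G i" "k \<in> carrier G"
      by blast
    have "h \<in> carrier G" using hk(2) N.subset by blast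
    then have "g \<otimes> c \<otimes> inv g = (g \<otimes> h \<otimes> inv g) \<otimes> (g \<otimes> k \<otimes> inv g)
        \<otimes> inv (g \<otimes> h \<otimes> inv g) \<otimes> inv (g \<otimes> k \<otimes> inv g)"
      unfolding hk(1) using g hk(3) by (simp add: m_assoc inv_mult_group)
    moreover have "g \<otimes> h \<otimes> inv g \<in> lower_central G i" using N.inv_op_closed2[OF g hk(2)] .
    ultimately show "g \<otimes> c \<otimes> inv g \<in> {h \<otimes> k \<otimes> inv h \<otimes> inv k | h k. h \<in> lower_central G i \<and> k \<in> carrier G}"
      using g hk(3) by blast
  qed (use N.subset in auto)
qed

end

lemma (in normal) rcos_mult_commute:
  assumes a: "a \<in> carrier G" and b: "b \<in> carrier G" and ab: "a \<otimes> b \<otimes> inv a \<otimes> inv b \<in> H"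
  shows "(H #> a) <#> (H #> b) = (H #> b) <#> (H #> a)"
proof -
  have "H #> (a \<otimes> b) = H #> ((a \<otimes> b \<otimes> inv a \<otimes> inv b) \<otimes> (b \<otimes> a))"
    using commutator_mult_swap[OF a b] by simp
  also have "\<dots> = (H #> (a \<otimes> b \<otimes> inv a \<otimes> inv b)) #> (b \<otimes> a)"
    using a b by (simp add: coset_mult_assoc subset)
  also have "\<dots> = H #> (b \<otimes> a)"
    using rcos_const[OF is_group ab] by simp
  finally show ?thesis using a b by (simp add: rcos_sum)
qed

context group begin

lemma coprime_commutator_in_lower_central:
  assumes x: "x \<in> carrier G" and y: "y \<in> carrier G" and cop: "coprime (ord x) (ord y)"
  shows "x \<otimes> y \<otimes> inv x \<otimes> inv y \<in> lower_central G i"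
proof (induction i)
  case 0
  show ?case using x y by simp
next
  case (Suc i)
  let ?c = "x \<otimes> y \<otimes> inv x \<otimes> inv y"
  define N where "N = lower_central G (Suc i)"
  interpret N: normal N G unfolding N_def by (rule lower_central_normal)
  interpret Q: group "G Mod N" by (rule N.factorgroup_is_group)
  interpret \<pi>: group_hom G "G Mod N" "\<lambda>a. N #> a"
    by (simp add: group_hom_def group_hom_axioms_def N.r_coset_hom_Mod is_group Q.is_group)
  have c: "?c \<in> carrier G" using x y by simp
  have central: "(N #> ?c) <#> (N #> z) = (N #> z) <#> (N #> ?c)" if "z \<in> carrier G" for z
    using N.rcos_mult_commute[OF c that] commutator_in_lower_central_Suc[OF Suc.IH that]
    unfolding N_def by blast
  have "(N #> ?c) <#> (N #> y) <#> (N #> x) = N #> (?c \<otimes> y \<otimes> x)"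
    by (simp only: N.rcos_sum[OF c y] N.rcos_sum[OF m_closed[OF c y] x])
  also have "?c \<otimes> y \<otimes> x = x \<otimes> y" using commutator_mult_swap[OF x y] x y c by (simp only: m_assoc)
  finally have "(N #> x) <#> (N #> y) = (N #> ?c) <#> (N #> y) <#> (N #> x)"
    by (simp only: N.rcos_sum[OF x y])
  moreover have "(N #> x) [^]\<^bsub>G Mod N\<^esub> ord x = \<one>\<^bsub>G Mod N\<^esub>"
    "(N #> y) [^]\<^bsub>G Mod N\<^esub> ord y = \<one>\<^bsub>G Mod N\<^esub>"
    using x y by (simp_all flip: \<pi>.hom_nat_pow)
  ultimately have "N #> ?c = \<one>\<^bsub>G Mod N\<^esub>"
    using Q.central_commutator_eq_one[OF \<pi>.hom_closed[OF x] \<pi>.hom_closed[OF y] \<pi>.hom_closed[OF c]]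
      central[OF x] central[OF y] cop by simp
  then show ?case using coset_join1[OF _ c N.subgroup_axioms] unfolding N_def by simp
qed

lemma nilpotent_commute_of_coprime_ord:
  assumes "nilpotent_group G" and x: "x \<in> carrier G" and y: "y \<in> carrier G"
    and cop: "coprime (ord x) (ord y)"
  shows "x \<otimes> y = y \<otimes> x"
proof -
  obtain i where "lower_central G i = {\<one>}" using assms(1) unfolding nilpotent_group_def by blast
  then have "x \<otimes> y \<otimes> inv x \<otimes> inv y = \<one>"
    using coprime_commutator_in_lower_central[OF x y cop, of i] by simp
  then show ?thesis using commutator_mult_swap[OF x y] x y by simp
qed

end

lemma coprime_prime_prod_primes:
  fixes S :: "nat set"
  assumes "Factorial_Ring.prime p" "\<forall>q\<in>S. Factorial_Ring.prime q" "p \<notin> S"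
  shows "coprime p (\<Prod>S)"
  using assms by (intro prod_coprime_right) (auto intro: primes_coprime)

lemma finite_prime_divs:
  assumes "group G" "finite (carrier G)"
  shows "finite (prime_divs G)"
proof -
  have "order G > 0" using assms by (simp add: group.is_monoid monoid.order_gt_0_iff_finite)
  then have "prime_divs G \<subseteq> {..order G}"
    by (auto simp: prime_divs_def intro: dvd_imp_le)
  then show ?thesis by (rule finite_subset) simp
qed

lemma (in group) nilpotent_ex_ord_prod:
  assumes nil: "nilpotent_group G" and fin: "finite (carrier G)"
    and "finite S" "S \<subseteq> prime_divs G"
  shows "\<exists>x\<in>carrier G. ord x = \<Prod>S"
  using assms(3,4)
proof (induction S rule: finite_induct)
  case empty
  show ?case by (intro bexI[of _ \<one>]) simp_all
next
  case (insert p S)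
  then obtain x where x: "x \<in> carrier G" "ord x = \<Prod>S" by auto
  have p: "Factorial_Ring.prime p" "p dvd order G" using insert(4) by (auto simp: prime_divs_def)
  then obtain y where y: "y \<in> carrier G" "ord y = p" using ex_ord_eq_prime[OF fin] by blast
  have cop: "coprime (ord y) (ord x)"
    using coprime_prime_prod_primes insert p unfolding x y by (auto simp: prime_divs_def)
  have "ord (y \<otimes> x) = p * \<Prod>S"
    using ord_mult_coprime[OF y(1) x(1) nilpotent_commute_of_coprime_ord[OF nil y(1) x(1) cop] cop] x y by simp
  then show ?case using insert x y by (intro bexI[of _ "y \<otimes> x"]) simp_all
qed

lemma GKC_skeleton1:
  assumes "group G" "finite (carrier G)"
  shows "skeleton1_vertices (GKC G) = prime_divs G"
    and "skeleton1_edges (GKC G) = {{p, q} | p q. GK_adj G p q}"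
proof -
  have "{p} \<in> GKC G \<longleftrightarrow> p \<in> prime_divs G" for p
    using group.ex_ord_eq_prime[OF assms] by (auto simp: GKC_def prime_divs_def)
  then show "skeleton1_vertices (GKC G) = prime_divs G"
    by (simp add: skeleton1_vertices_def)
  have "e \<in> GKC G \<and> card e = 2 \<longleftrightarrow> (\<exists>p q. e = {p, q} \<and> GK_adj G p q)" for e
    by (auto simp: GKC_def GK_adj_def card_2_iff; blast)
  then show "skeleton1_edges (GKC G) = {{p, q} | p q. GK_adj G p q}"
    by (auto simp: skeleton1_edges_def)
qed

lemma GKC_simplex_if_nilpotent:
  assumes "nilpotent_group G" "finite (carrier G)"
  shows "is_simplex_complex (prime_divs G) (GKC G)"
proof -
  have "group G" using assms(1) by (simp add: nilpotent_group_def)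
  then show ?thesis
    using group.nilpotent_ex_ord_prod[OF _ assms finite_prime_divs subset_refl] assms(2)
    by (auto simp: is_simplex_complex_def GKC_def)
qed

lemma carrier_dir_power [simp]: "carrier (dir_power G n) = (\<Pi>\<^sub>E i\<in>{..<n}. carrier G)"
  by (simp add: dir_power_def)

lemma group_dir_power: "group G \<Longrightarrow> group (dir_power G n)"
  by (simp add: dir_power_def)

lemma prime_divs_dir_power:
  assumes "0 < n"
  shows "prime_divs (dir_power G n) = prime_divs G"
proof -
  have "order (dir_power G n) = order G ^ n" by (simp add: order_def card_PiE)
  then show ?thesis using assms by (auto simp: prime_divs_def prime_dvd_power_iff)
qed

lemma nat_pow_dir_power:
  assumes "x \<in> carrier (dir_power G n)"
  shows "x [^]\<^bsub>dir_power G n\<^esub> (k::nat) = (\<lambda>i\<in>{..<n}. x i [^]\<^bsub>G\<^esub> k)"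
  by (induction k) (auto simp: dir_power_def fun_eq_iff)

lemma ord_dir_power:
  assumes G: "group G" and x: "x \<in> carrier (dir_power G n)"
  shows "group.ord (dir_power G n) x = Lcm ((\<lambda>i. group.ord G (x i)) ` {..<n})"
proof -
  have "x [^]\<^bsub>dir_power G n\<^esub> k = \<one>\<^bsub>dir_power G n\<^esub> \<longleftrightarrow> (\<forall>i<n. x i [^]\<^bsub>G\<^esub> k = \<one>\<^bsub>G\<^esub>)" for k :: nat
    unfolding nat_pow_dir_power[OF x] by (auto simp: dir_power_def fun_eq_iff)
  also have "\<dots> k \<longleftrightarrow> Lcm ((\<lambda>i. group.ord G (x i)) ` {..<n}) dvd k" for k
  proof -
    have "x i \<in> carrier G" if "i < n" for i using x that by auto
    then show ?thesis by (auto simp: Lcm_dvd_iff group.pow_eq_id[OF G])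
  qed
  finally show ?thesis using group.ord_unique[OF group_dir_power[OF G] x] by blast
qed

lemma ord_dir_power_extend:
  assumes G: "group G" and x: "x \<in> carrier (dir_power G n)" and a: "a \<in> carrier G"
  shows "x(n := a) \<in> carrier (dir_power G (Suc n))"
    and "group.ord (dir_power G (Suc n)) (x(n := a)) = lcm (group.ord G a) (group.ord (dir_power G n) x)"
proof -
  show x': "x(n := a) \<in> carrier (dir_power G (Suc n))"
    using x a by (auto simp: PiE_iff extensional_def)
  have "(\<lambda>i. group.ord G ((x(n := a)) i)) ` {..<Suc n} = insert (group.ord G a) ((\<lambda>i. group.ord G (x i)) ` {..<n})"
    by (auto simp: lessThan_Suc)
  then show "group.ord (dir_power G (Suc n)) (x(n := a)) = lcm (group.ord G a) (group.ord (dir_power G n) x)"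
    by (simp add: ord_dir_power[OF G x] ord_dir_power[OF G x'])
qed

lemma dir_power_ex_ord_prod:
  assumes G: "group G" and fin: "finite (carrier G)" and "finite S" "S \<subseteq> prime_divs G"
  shows "\<exists>x\<in>carrier (dir_power G (card S)). group.ord (dir_power G (card S)) x = \<Prod>S"
  using assms(3,4)
proof (induction S rule: finite_induct)
  case empty
  interpret G0: group "dir_power G 0" using group_dir_power[OF G] .
  show ?case using G0.one_closed G0.ord_id by (metis card.empty prod.empty)
next
  case (insert p S)
  then obtain x where x: "x \<in> carrier (dir_power G (card S))"
    "group.ord (dir_power G (card S)) x = \<Prod>S" by auto
  have p: "Factorial_Ring.prime p" "p dvd order G" using insert(4) by (auto simp: prime_divs_def)
  then obtain y where y: "y \<in> carrier G" "group.ord G y = p" using group.ex_ord_eq_prime[OF G fin] by blast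
  have "coprime p (\<Prod>S)"
    using coprime_prime_prod_primes insert p by (auto simp: prime_divs_def)
  then have "group.ord (dir_power G (Suc (card S))) (x(card S := y)) = \<Prod>(insert p S)"
    using ord_dir_power_extend(2)[OF G x(1) y(1)] x y insert by (simp add: lcm_coprime)
  then show ?case using ord_dir_power_extend(1)[OF G x(1) y(1)] insert by auto
qed

lemma upward_closed_threshold:
  fixes Q :: "nat \<Rightarrow> bool"
  assumes succ: "\<And>n. 0 < n \<Longrightarrow> Q n \<Longrightarrow> Q (Suc n)" and "0 < m" "Q m"
  shows "\<exists>d>0. \<forall>n>0. Q n \<longleftrightarrow> d \<le> n"
proof (intro exI conjI allI impI)
  define d where "d = (LEAST n. 0 < n \<and> Q n)"
  have d: "0 < d" "Q d" using LeastI[of "\<lambda>n. 0 < n \<and> Q n" m] assms(2,3) by (simp_all add: d_def)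
  then show "0 < d" by simp
  fix n :: nat assume "0 < n"
  show "Q n \<longleftrightarrow> d \<le> n"
  proof
    show "Q n \<Longrightarrow> d \<le> n" using \<open>0 < n\<close> by (simp add: d_def Least_le)
    show "d \<le> n \<Longrightarrow> Q n"
    proof (induction n rule: dec_induct)
      case (step k) then show ?case using \<open>0 < d\<close> succ by simp
    qed (use d in simp)
  qed
qed

lemma GKC_dir_power_threshold:
  assumes G: "group G" and fin: "finite (carrier G)"
  shows "\<exists>d>0. \<forall>n>0. is_simplex_complex (prime_divs (dir_power G n)) (GKC (dir_power G n)) \<longleftrightarrow> d \<le> n"
proof (rule upward_closed_threshold)
  let ?P = "prime_divs G"
  have simplex_iff: "is_simplex_complex (prime_divs (dir_power G n)) (GKC (dir_power G n)) \<longleftrightarrow>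
      (\<exists>x\<in>carrier (dir_power G n). group.ord (dir_power G n) x = \<Prod>?P)" if "0 < n" for n
    by (simp add: is_simplex_complex_def GKC_def prime_divs_dir_power[OF that])
  have extend: "\<exists>x'\<in>carrier (dir_power G (Suc n)). group.ord (dir_power G (Suc n)) x' = \<Prod>?P"
    if "x \<in> carrier (dir_power G n)" "group.ord (dir_power G n) x = \<Prod>?P" for n x
  proof
    have one: "\<one>\<^bsub>G\<^esub> \<in> carrier G" by (simp add: G group.is_monoid monoid.one_closed)
    show "x(n := \<one>\<^bsub>G\<^esub>) \<in> carrier (dir_power G (Suc n))"
      using ord_dir_power_extend(1)[OF G that(1) one] .
    show "group.ord (dir_power G (Suc n)) (x(n := \<one>\<^bsub>G\<^esub>)) = \<Prod>?P"
      using ord_dir_power_extend(2)[OF G that(1) one] that(2) by (simp add: group.ord_id[OF G])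
  qed
  show "is_simplex_complex (prime_divs (dir_power G (Suc n))) (GKC (dir_power G (Suc n)))"
    if "0 < n" and "is_simplex_complex (prime_divs (dir_power G n)) (GKC (dir_power G n))" for n
    using that extend simplex_iff[OF that(1)] simplex_iff[of "Suc n"] by blast
  show "0 < Suc (card ?P)" by simp
  show "is_simplex_complex (prime_divs (dir_power G (Suc (card ?P)))) (GKC (dir_power G (Suc (card ?P))))"
    using dir_power_ex_ord_prod[OF G fin finite_prime_divs[OF G fin] subset_refl] extend
      simplex_iff[of "Suc (card ?P)"] by blast
qed

theorem mainTheorem5:
  fixes G :: "('a, 'b) monoid_scheme"
  assumes "group G" and "finite (carrier G)"
  shows "(skeleton1_vertices (GKC G) = prime_divs G
          \<and> skeleton1_edges (GKC G) = {{p, q} | p q. GK_adj G p q})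
       \<and> (nilpotent_group G \<longrightarrow> is_simplex_complex (prime_divs G) (GKC G))
       \<and> (\<exists>d::nat. d > 0 \<and> (\<forall>n::nat. n > 0 \<longrightarrow>
           (is_simplex_complex (prime_divs (dir_power G n)) (GKC (dir_power G n))
            \<longleftrightarrow> n \<ge> d)))"
  using GKC_skeleton1[OF assms] GKC_simplex_if_nilpotent[OF _ assms(2)]
    GKC_dir_power_threshold[OF assms] by blast

end
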